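(* Let $\Omega\subseteq\mathbb{R}^n$ be open, let $F:\Omega\times\mathbb{R}^N\times\mathbb{R}^{N\times n}\times(\mathbb{R}^N\otimes\mathbb{R}^{n\times n}_s)\to\mathbb{R}^N$ be locally bounded, and let $u:\Omega\to\mathbb{R}^N$ be continuous. Consider the system $F(x,u,Du,D^2u)=0$ on $\Omega$. (a) If $u$ is a contact solution of this system and $F$ is continuous, then at every point $x\in\Omega$ at which $u$ is twice differentiable we have $F(x,u(x),Du(x),D^2u(x))=0$. (b) If $u$ is twice differentiable at every point of $\Omega$ with $F(x,u(x),Du(x),D^2u(x))=0$ for all $x\in\Omega$, and $F$ is degenerate elliptic, then $u$ is a contact solution of the system.
   Context: Notation: summation over repeated indices; Greek indices run over $1,\dots,N$, Latin over $1,\dots,n$. $\mathbb{R}^{n\times n}_s$ denotes symmetric $n\times n$ matrices; $\mathbb{R}^N\otimes\mathbb{R}^{n\times n}_s$ is the space of arrays $\mathbf{X}=(\mathbf{X}_{\alpha ij})$ with $\mathbf{X}_{\alpha ij}=\mathbf{X}_{\alpha ji}$, and $\mathbf{X}:z\otimes z\in\mathbb{R}^N$ has components $\mathbf{X}_{\alpha ij}z_iz_j$. For $a,b\in\mathbb{R}^N$, $a\vee b:=\frac12(a\otimes b+b\otimes a)$, a symmetric $N\times N$ matrix; inequalities between symmetric matrices are in the sense of quadratic forms. $\mathbb{S}^{N-1}$ is the unit sphere of $\mathbb{R}^N$; for $\xi\in\mathbb{R}^N$, $\xi^\top v$ is the Euclidean inner product. Second contact jet: for continuous $u:\Omega\to\mathbb{R}^N$,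 $x\in\Omega$, $\xi\in\mathbb{S}^{N-1}$, $J^{2,\xi}u(x)$ is the set of $(P,\mathbf{X})\in\mathbb{R}^{N\times n}\times(\mathbb{R}^N\otimes\mathbb{R}^{n\times n}_s)$ such that there is a continuous $T:\mathbb{R}^n\setminus\{0\}\to\mathbb{R}^{N\times N}_s$ with $|T(y)|\to0$ as $y\to0$ and $\xi\vee[u(z)-u(x)-P(z-x)-\frac12\mathbf{X}:(z-x)\otimes(z-x)]\le |z-x|^2T(z-x)$ for all $z\neq x$ close to $x$. Its closure $\bar J^{2,\xi}u(x)$ is the set of $(P,\mathbf{X})$ for which there exist $\xi_m\in\mathbb{S}^{N-1}$, $x_m\in\Omega$, $(P_m,\mathbf{X}_m)\in J^{2,\xi_m}u(x_m)$ with $(\xi_m,x_m,P_m,\mathbf{X}_m)\to(\xi,x,P,\mathbf{X})$. $\xi$-envelope: $\xi^*F(x,\eta,P,\mathbf{X}):=\limsup_{\varepsilon\to0}\sup\{\xi^\top F(y,\theta,Q,\mathbf{Y}):|x-y|+|\eta-\theta|+|P-Q|+|\mathbf{X}-\mathbf{Y}|\le\varepsilon\}$. Contact solution: the continuous $u$ is a contact solution of $F(\cdot,u,Du,D^2u)=0$ on $\Omega$ if for all $x\in\Omega$, $\xi\in\mathbb{S}^{N-1}$ and $(P,\mathbf{X})\in\bar J^{2,\xi}u(x)$ we have $\xi^*F(x,u(x),P,\mathbf{X})\ge0$. Degenerate ellipticity: $F$ is degenerate elliptic if for all $(x,\eta,P)$ and all $\mathbf{X},\mathbf{Y}\in\mathbb{R}^N\otimes\mathbb{R}^{n\times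 n}_s$ the symmetric $n\times n$ matrix with entries $\big(F_\alpha(x,\eta,P,\mathbf{X})-F_\alpha(x,\eta,P,\mathbf{Y})\big)(\mathbf{X}-\mathbf{Y})_{\alpha ij}$ is positive semidefinite. *)

theory Defs
  imports "HOL-Analysis.Analysis"
begin

text \<open>Dimensions: n = CARD('n), N = CARD('N).
  Gradients P in R^{N x n}: real^'n^'N (row alpha, column i).
  Second-order arrays X in R^N (x) R^{n x n}_s: real^'n^'n^'N, entry X$alpha$i$j.\<close>

definition sym_arr :: "real^'n^'n^'N \<Rightarrow> bool" where
  "sym_arr X \<longleftrightarrow> (\<forall>a i j. X$a$i$j = X$a$j$i)"

definition contr :: "real^'n^'n^'N \<Rightarrow> real^'n \<Rightarrow> real^'N" where
  "contr X z = (\<chi> a. \<Sum>i\<in>UNIV. \<Sum>j\<in>UNIV. X$a$i$j * z$i * z$j)"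

definition vee :: "real^'N \<Rightarrow> real^'N \<Rightarrow> real^'N^'N" where
  "vee a b = (\<chi> i k. (a$i * b$k + b$i * a$k) / 2)"

definition symmetric_mat :: "real^'k^'k \<Rightarrow> bool" where
  "symmetric_mat A \<longleftrightarrow> transpose A = A"

definition mat_le :: "real^'k^'k \<Rightarrow> real^'k^'k \<Rightarrow> bool" where
  "mat_le A B \<longleftrightarrow> (\<forall>v. v \<bullet> (A *v v) \<le> v \<bullet> (B *v v))"

definition psd :: "real^'k^'k \<Rightarrow> bool" where
  "psd A \<longleftrightarrow> (\<forall>v. 0 \<le> v \<bullet> (A *v v))"

definition jet2 :: "(real^'n \<Rightarrow> real^'N) \<Rightarrow> (real^'n) set \<Rightarrow> real^'N \<Rightarrow> real^'n
    \<Rightarrow> real^'n^'N \<Rightarrow> real^'n^'n^'N \<Rightarrow> bool" where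
  "jet2 u \<Omega> \<xi> x P X \<longleftrightarrow> sym_arr X \<and>
     (\<exists>T :: real^'n \<Rightarrow> real^'N^'N.
        continuous_on (UNIV - {0}) T \<and> (\<forall>y. y \<noteq> 0 \<longrightarrow> symmetric_mat (T y)) \<and>
        ((\<lambda>y. norm (T y)) \<longlongrightarrow> 0) (at 0) \<and>
        (\<exists>r>0. \<forall>z\<in>\<Omega>. z \<noteq> x \<and> dist z x < r \<longrightarrow>
           mat_le (vee \<xi> (u z - u x - P *v (z - x) - (1/2) *\<^sub>R contr X (z - x)))
                  ((norm (z - x))\<^sup>2 *\<^sub>R T (z - x))))"

definition cjet2 :: "(real^'n \<Rightarrow> real^'N) \<Rightarrow> (real^'n) set \<Rightarrow> real^'N \<Rightarrow> real^'n
    \<Rightarrow> real^'n^'N \<Rightarrow> real^'n^'n^'N \<Rightarrow> bool" where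
  "cjet2 u \<Omega> \<xi> x P X \<longleftrightarrow>
     (\<exists>\<xi>s xs Ps Xs. (\<forall>m. norm (\<xi>s m) = 1 \<and> xs m \<in> \<Omega> \<and>
                         jet2 u \<Omega> (\<xi>s m) (xs m) (Ps m) (Xs m)) \<and>
        \<xi>s \<longlonglongrightarrow> \<xi> \<and> xs \<longlonglongrightarrow> x \<and> Ps \<longlonglongrightarrow> P \<and> Xs \<longlonglongrightarrow> X)"

definition xi_env :: "(real^'n \<Rightarrow> real^'N \<Rightarrow> real^'n^'N \<Rightarrow> real^'n^'n^'N \<Rightarrow> real^'N)
    \<Rightarrow> (real^'n) set \<Rightarrow> real^'N \<Rightarrow> real^'n \<Rightarrow> real^'N \<Rightarrow> real^'n^'N \<Rightarrow> real^'n^'n^'N \<Rightarrow> ereal" where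
  "xi_env F \<Omega> \<xi> x \<eta> P X =
     Limsup (at_right (0::real)) (\<lambda>\<epsilon>.
       SUP q \<in> {(y, \<theta>, Q, Y). y \<in> \<Omega> \<and> sym_arr Y \<and>
                 norm (x - y) + norm (\<eta> - \<theta>) + norm (P - Q) + norm (X - Y) \<le> \<epsilon>}.
         ereal (\<xi> \<bullet> (case q of (y, \<theta>, Q, Y) \<Rightarrow> F y \<theta> Q Y)))"

definition contact_solution :: "(real^'n \<Rightarrow> real^'N \<Rightarrow> real^'n^'N \<Rightarrow> real^'n^'n^'N \<Rightarrow> real^'N)
    \<Rightarrow> (real^'n) set \<Rightarrow> (real^'n \<Rightarrow> real^'N) \<Rightarrow> bool" where
  "contact_solution F \<Omega> u \<longleftrightarrow> continuous_on \<Omega> u \<and>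
     (\<forall>x\<in>\<Omega>. \<forall>\<xi>. norm \<xi> = 1 \<longrightarrow> (\<forall>P X. cjet2 u \<Omega> \<xi> x P X \<longrightarrow> xi_env F \<Omega> \<xi> x (u x) P X \<ge> 0))"

definition dom_F :: "(real^'n) set \<Rightarrow> ((real^'n) \<times> (real^'N) \<times> (real^'n^'N) \<times> (real^'n^'n^'N)) set" where
  "dom_F \<Omega> = \<Omega> \<times> UNIV \<times> UNIV \<times> {X. sym_arr X}"

definition locally_bounded :: "(real^'n \<Rightarrow> real^'N \<Rightarrow> real^'n^'N \<Rightarrow> real^'n^'n^'N \<Rightarrow> real^'N)
    \<Rightarrow> (real^'n) set \<Rightarrow> bool" where
  "locally_bounded F \<Omega> \<longleftrightarrow> (\<forall>p\<in>dom_F \<Omega>. \<exists>r>0. \<exists>M. \<forall>q\<in>dom_F \<Omega>. dist q p < r \<longrightarrow>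
      norm (case q of (y, \<theta>, Q, Y) \<Rightarrow> F y \<theta> Q Y) \<le> M)"

definition F_continuous :: "(real^'n \<Rightarrow> real^'N \<Rightarrow> real^'n^'N \<Rightarrow> real^'n^'n^'N \<Rightarrow> real^'N)
    \<Rightarrow> (real^'n) set \<Rightarrow> bool" where
  "F_continuous F \<Omega> \<longleftrightarrow> continuous_on (dom_F \<Omega>) (\<lambda>(y, \<theta>, Q, Y). F y \<theta> Q Y)"

definition degenerate_elliptic :: "(real^'n \<Rightarrow> real^'N \<Rightarrow> real^'n^'N \<Rightarrow> real^'n^'n^'N \<Rightarrow> real^'N)
    \<Rightarrow> (real^'n) set \<Rightarrow> bool" where
  "degenerate_elliptic F \<Omega> \<longleftrightarrow> (\<forall>x\<in>\<Omega>. \<forall>\<eta> P X Y. sym_arr X \<longrightarrow> sym_arr Y \<longrightarrow>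
      psd (\<chi> i j. \<Sum>a\<in>UNIV. (F x \<eta> P X $ a - F x \<eta> P Y $ a) * (X - Y)$a$i$j))"

definition twice_diff_at :: "(real^'n \<Rightarrow> real^'N) \<Rightarrow> real^'n \<Rightarrow> real^'n^'N \<Rightarrow> real^'n^'n^'N \<Rightarrow> bool" where
  "twice_diff_at u x P X \<longleftrightarrow>
     (\<exists>S Du. open S \<and> x \<in> S \<and> (\<forall>y\<in>S. (u has_derivative (\<lambda>h. Du y *v h)) (at y)) \<and>
        Du x = P \<and>
        (Du has_derivative (\<lambda>h. \<chi> a i. \<Sum>j\<in>UNIV. X$a$i$j * h$j)) (at x))"

end

theory Submission
  imports Defs
begin

(* (a) At a point where u is twice differentiable, Taylor's theorem makes the second-order
   remainder o(|h|^2); a continuous gauge dominating it puts (Du(x), D^2u(x)) into the contact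
   jet in every direction xi.  For continuous F the xi-envelope is just xi . F, so the contact
   inequality gives xi . F(x, u, Du, D^2u) >= 0 for all unit xi, i.e. F = 0.
   (b) If (Q, Z) is a contact jet in direction zeta at a point y where u is twice differentiable,
   subtracting Taylor's expansion from the contact inequality and restricting to rays h = t h0
   forces Q = Du(y) and (zeta . v)((Z - D^2u(y)) : h (x) h . v) >= 0, so every
   (Z - D^2u(y)) : h (x) h is a nonnegative multiple of zeta.  Degenerate ellipticity together
   with F(y, u, Du, D^2u) = 0 then yields zeta . F(y, u, Du, Z) >= 0, and local boundedness of F
   carries this through the closure of the jet into the envelope. *)

lemma norm_matrix_vector_mult_le:
  fixes A :: "real^'n^'m"
  shows "norm (A *v x) \<le> real CARD('m) * norm A * norm x"
proof -
  have "norm (A *v x) \<le> (\<Sum>i\<in>UNIV. \<bar>(A *v x)$i\<bar>)"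
    by (rule norm_le_l1_cart)
  also have "\<dots> \<le> (\<Sum>i\<in>(UNIV::'m set). norm A * norm x)"
  proof (rule sum_mono)
    fix i
    have "\<bar>(A *v x)$i\<bar> \<le> norm (A$i) * norm x"
      by (simp add: matrix_vector_mul_component Cauchy_Schwarz_ineq2)
    also have "\<dots> \<le> norm A * norm x"
      by (rule mult_right_mono[OF Finite_Cartesian_Product.norm_nth_le norm_ge_zero])
    finally show "\<bar>(A *v x)$i\<bar> \<le> norm A * norm x" .
  qed
  finally show ?thesis
    by simp
qed

lemma quadratic_form_le:
  fixes T :: "real^'m^'m"
  shows "v \<bullet> (T *v v) \<le> real CARD('m) * norm T * (norm v)\<^sup>2"
proof -
  have "v \<bullet> (T *v v) \<le> norm v * norm (T *v v)"
    by (rule norm_cauchy_schwarz)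
  also have "\<dots> \<le> norm v * (real CARD('m) * norm T * norm v)"
    by (simp add: mult_left_mono norm_matrix_vector_mult_le)
  finally show ?thesis
    by (simp add: power2_eq_square mult_ac)
qed

lemma quadratic_form_vee: "v \<bullet> (vee a b *v v) = (a \<bullet> v) * (b \<bullet> v)"
proof -
  have "vee a b *v v = (1/2) *\<^sub>R ((b \<bullet> v) *\<^sub>R a + (a \<bullet> v) *\<^sub>R b)"
    by (simp add: vec_eq_iff vee_def matrix_vector_mult_def inner_vec_def sum_distrib_left
        sum.distrib add_divide_distrib algebra_simps)
  then show ?thesis
    by (simp add: inner_commute algebra_simps)
qed

lemma quadratic_form_scaled_id:
  fixes v :: "real^'m"
  shows "v \<bullet> ((c *\<^sub>R mat 1) *v v) = c * (norm v)\<^sup>2"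
proof -
  have "(c *\<^sub>R mat 1) *v v = c *\<^sub>R v"
    using scaleR_matrix_vector_assoc[of c "mat 1" v] by simp
  then show ?thesis
    by (simp add: power2_norm_eq_inner)
qed

lemma mat_le_vee_scaled_id:
  assumes "norm \<xi> \<le> 1" and "norm w \<le> c"
  shows "mat_le (vee \<xi> w) (c *\<^sub>R mat 1)"
  unfolding mat_le_def quadratic_form_vee quadratic_form_scaled_id
proof
  fix v
  have "(\<xi> \<bullet> v) * (w \<bullet> v) \<le> \<bar>\<xi> \<bullet> v\<bar> * \<bar>w \<bullet> v\<bar>"
    by (simp add: abs_mult[symmetric])
  also have "\<dots> \<le> (1 * norm v) * (c * norm v)"
    using assms by (intro mult_mono order_trans[OF Cauchy_Schwarz_ineq2] mult_right_mono) auto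
  finally show "(\<xi> \<bullet> v) * (w \<bullet> v) \<le> c * (norm v)\<^sup>2"
    by (simp add: power2_eq_square mult_ac)
qed

text \<open>If \<open>w\<close> had a component \<open>p \<noteq> 0\<close> orthogonal to \<open>\<xi>\<close>, the test vector
  \<open>v = \<xi> - s p\<close> with large \<open>s\<close> would make the product negative.\<close>
lemma nonneg_multiple_if_inner_mult_nonneg:
  fixes \<xi> w :: "'a::real_inner"
  assumes nonneg: "\<And>v. 0 \<le> (\<xi> \<bullet> v) * (w \<bullet> v)" and "\<xi> \<noteq> 0"
  shows "\<exists>c\<ge>0. w = c *\<^sub>R \<xi>"
proof -
  define c where "c = (\<xi> \<bullet> w) / (\<xi> \<bullet> \<xi>)"
  define p where "p = w - c *\<^sub>R \<xi>"
  have \<xi>\<xi>: "\<xi> \<bullet> \<xi> > 0"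
    using \<open>\<xi> \<noteq> 0\<close> by simp
  have p\<xi>: "\<xi> \<bullet> p = 0"
    using \<xi>\<xi> by (simp add: p_def c_def inner_diff_right)
  have wp: "w \<bullet> p = p \<bullet> p"
    using p\<xi> by (simp add: p_def inner_diff_left inner_commute)
  have "p = 0"
  proof (rule ccontr)
    assume "p \<noteq> 0"
    then have pp: "p \<bullet> p > 0"
      by simp
    define s where "s = (\<bar>\<xi> \<bullet> w\<bar> + 1) / (p \<bullet> p)"
    have "0 \<le> (\<xi> \<bullet> (\<xi> - s *\<^sub>R p)) * (w \<bullet> (\<xi> - s *\<^sub>R p))"
      by (rule nonneg)
    also have "\<dots> = (\<xi> \<bullet> \<xi>) * (\<xi> \<bullet> w - s * (p \<bullet> p))"
      using p\<xi> wp by (simp add: inner_diff_right inner_commute)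
    also have "\<dots> = (\<xi> \<bullet> \<xi>) * (\<xi> \<bullet> w - \<bar>\<xi> \<bullet> w\<bar> - 1)"
      using pp by (simp add: s_def)
    also have "\<dots> < 0"
      using \<xi>\<xi> by (intro mult_pos_neg) auto
    finally show False
      by simp
  qed
  moreover have "0 \<le> (\<xi> \<bullet> \<xi>) * (w \<bullet> \<xi>)"
    by (rule nonneg)
  then have "c \<ge> 0"
    using \<xi>\<xi> by (simp add: c_def inner_commute zero_le_mult_iff)
  ultimately show ?thesis
    by (auto simp: p_def)
qed

lemma eq_0_if_inner_mult_eq_0:
  fixes \<xi> a :: "'a::real_inner"
  assumes vanish: "\<And>v. (\<xi> \<bullet> v) * (a \<bullet> v) = 0" and "\<xi> \<noteq> 0"
  shows "a = 0"
proof -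
  obtain c where "a = c *\<^sub>R \<xi>"
    using nonneg_multiple_if_inner_mult_nonneg[of \<xi> a] assms by force
  moreover have "(\<xi> \<bullet> \<xi>) * (a \<bullet> \<xi>) = 0"
    by (rule vanish)
  ultimately show ?thesis
    using \<open>\<xi> \<noteq> 0\<close> by simp
qed

lemma contr_diff: "contr (A - B) h = contr A h - contr B h"
  by (simp add: contr_def vec_eq_iff sum_subtractf algebra_simps)

lemma contr_scaleR: "contr A (t *\<^sub>R h) = t\<^sup>2 *\<^sub>R contr A h"
  by (simp add: contr_def vec_eq_iff sum_distrib_left power2_eq_square mult_ac)

lemma sym_arr_diff: "sym_arr A \<Longrightarrow> sym_arr B \<Longrightarrow> sym_arr (A - B)"
  by (simp add: sym_arr_def)

lemma sym_arr_eq_0_if_contr_eq_0: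
  assumes "sym_arr D" and vanish: "\<And>h. contr D h = 0"
  shows "D = 0"
proof -
  have if_1: "x * (if b then 1 else 0) = (if b then x else 0)"
    "(if b then 1 else 0) * x = (if b then x else 0)" for x :: real and b
    by simp_all
  have diag: "contr D (axis i 1) $ a = D$a$i$i" for a i
    by (simp add: contr_def axis_def if_1 cong: if_cong)
  have "contr D (axis i 1 + axis j 1) $ a = D$a$i$i + D$a$i$j + D$a$j$i + D$a$j$j" for a i j
    by (simp add: contr_def axis_def algebra_simps sum.distrib if_1 cong: if_cong)
  then have "D$a$i$j = 0" for a i j
    using diag vanish \<open>sym_arr D\<close> by (simp add: sym_arr_def)
  then show ?thesis
    by (simp add: vec_eq_iff)
qed

lemma quadratic_form_contr:
  "v \<bullet> ((\<chi> i j. \<Sum>a\<in>UNIV. g$a * D$a$i$j) *v v) = g \<bullet> contr D v"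
proof -
  have "v \<bullet> ((\<chi> i j. \<Sum>a\<in>UNIV. g$a * D$a$i$j) *v v)
      = (\<Sum>i\<in>UNIV. \<Sum>j\<in>UNIV. \<Sum>a\<in>UNIV. g$a * D$a$i$j * v$i * v$j)"
    by (simp add: inner_vec_def matrix_vector_mult_def sum_distrib_left sum_distrib_right mult_ac)
  also have "\<dots> = (\<Sum>i\<in>UNIV. \<Sum>a\<in>UNIV. \<Sum>j\<in>UNIV. g$a * D$a$i$j * v$i * v$j)"
    by (rule sum.cong[OF refl], rule sum.swap)
  also have "\<dots> = (\<Sum>a\<in>UNIV. \<Sum>i\<in>UNIV. \<Sum>j\<in>UNIV. g$a * D$a$i$j * v$i * v$j)"
    by (rule sum.swap)
  also have "\<dots> = g \<bullet> contr D v"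
    by (simp add: inner_vec_def contr_def sum_distrib_left mult_ac)
  finally show ?thesis .
qed

lemma degenerate_elliptic_inner_nonneg:
  assumes "degenerate_elliptic F \<Omega>" and "y \<in> \<Omega>" and "sym_arr Y" and "sym_arr Z"
    and F0: "F y \<eta> P Y = 0"
    and cone: "\<And>h v. 0 \<le> (\<zeta> \<bullet> v) * (contr (Z - Y) h \<bullet> v)"
  shows "0 \<le> \<zeta> \<bullet> F y \<eta> P Z"
proof (cases "\<zeta> = 0")
  case False
  have "psd (\<chi> i j. \<Sum>a\<in>UNIV. (F y \<eta> P Z $ a - F y \<eta> P Y $ a) * (Z - Y)$a$i$j)"
    using assms(1-4) unfolding degenerate_elliptic_def by blast
  then have "psd (\<chi> i j. \<Sum>a\<in>UNIV. F y \<eta> P Z $ a * (Z - Y)$a$i$j)"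
    by (simp only: F0 zero_index diff_zero)
  then have monotone: "0 \<le> F y \<eta> P Z \<bullet> contr (Z - Y) h" for h
    unfolding psd_def quadratic_form_contr by blast
  show ?thesis
  proof (cases "\<forall>h. contr (Z - Y) h = 0")
    case True
    then have "Z = Y"
      using sym_arr_eq_0_if_contr_eq_0[OF sym_arr_diff] assms(3,4) by auto
    then show ?thesis
      using F0 by simp
  next
    case False
    then obtain h where h: "contr (Z - Y) h \<noteq> 0"
      by blast
    obtain c where "c \<ge> 0" and c: "contr (Z - Y) h = c *\<^sub>R \<zeta>"
      using nonneg_multiple_if_inner_mult_nonneg[OF cone \<open>\<zeta> \<noteq> 0\<close>] by blast
    with h have "c > 0"
      by auto
    moreover have "0 \<le> c * (\<zeta> \<bullet> F y \<eta> P Z)"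
      using monotone[of h] by (simp add: c inner_commute)
    ultimately show ?thesis
      by (simp add: zero_le_mult_iff)
  qed
qed simp

lemma linear_quadratic_le_little_o:
  fixes c d :: real
  assumes small: "\<And>\<epsilon>. \<epsilon> > 0 \<Longrightarrow> eventually (\<lambda>t. t * c + t\<^sup>2 * d \<le> \<epsilon> * t\<^sup>2) (at 0)"
  shows "c = 0" and "d \<le> 0"
proof -
  have left_neg: "eventually (\<lambda>t::real. t < 0) (at_left 0)"
    unfolding eventually_at_left_field by (intro exI[of _ "-1"]) auto
  have bound: "t * c \<le> t * (t * (1 - d))" if "t * c + t\<^sup>2 * d \<le> t\<^sup>2" for t
    using that by (simp add: power2_eq_square algebra_simps)
  have "eventually (\<lambda>t. t < 0 \<and> t * c + t\<^sup>2 * d \<le> t\<^sup>2) (at_left 0)"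
    and "eventually (\<lambda>t. t > 0 \<and> t * c + t\<^sup>2 * d \<le> t\<^sup>2) (at_right 0)"
    using small[of 1] left_neg eventually_at_right_less[of 0]
    by (auto simp: eventually_at_split intro!: eventually_conj)
  then have "eventually (\<lambda>t. t * (1 - d) \<le> c) (at_left 0)"
    and "eventually (\<lambda>t. c \<le> t * (1 - d)) (at_right 0)"
    by (auto elim!: eventually_mono dest!: bound simp: mult_le_cancel_left)
  moreover have "((\<lambda>t. t * (1 - d)) \<longlongrightarrow> 0) (at_left 0)" "((\<lambda>t. t * (1 - d)) \<longlongrightarrow> 0) (at_right 0)"
    by (auto intro!: tendsto_mult_left_zero)
  ultimately show c0: "c = 0"
    using tendsto_upperbound tendsto_lowerbound
    by (metis order_antisym trivial_limit_at_left_real trivial_limit_at_right_real)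
  show "d \<le> 0"
  proof (rule field_le_epsilon)
    fix \<epsilon> :: real
    assume "\<epsilon> > 0"
    then have "eventually (\<lambda>t. t \<noteq> 0 \<and> t\<^sup>2 * d \<le> \<epsilon> * t\<^sup>2) (at 0)"
      using small c0 by (auto intro: eventually_conj simp: eventually_at_filter)
    then obtain t where "t \<noteq> 0" "t\<^sup>2 * d \<le> \<epsilon> * t\<^sup>2"
      using eventually_happens'[OF at_neq_bot] by blast
    then show "d \<le> 0 + \<epsilon>"
      by (simp add: mult.commute)
  qed
qed

definition hess_map :: "real^'n^'n^'N \<Rightarrow> real^'n \<Rightarrow> real^'n^'N" where
  "hess_map X h = (\<chi> a i. \<Sum>j\<in>UNIV. X$a$i$j * h$j)"

lemma linear_hess_map: "linear (hess_map X)"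
  by (rule linearI) (simp_all add: hess_map_def vec_eq_iff sum.distrib sum_distrib_left algebra_simps)

lemma hess_map_apply_self: "hess_map X h *v h = contr X h"
  by (simp add: hess_map_def contr_def vec_eq_iff matrix_vector_mult_def sum_distrib_left
      sum_distrib_right mult_ac)

lemma hess_map_axis: "hess_map X (axis q 1) *v axis p 1 = (\<chi> a. X$a$p$q)"
  by (simp add: hess_map_def matrix_vector_mult_def axis_def vec_eq_iff if_distrib cong: if_cong)

lemma twice_diff_at_ball_estimate:
  assumes "twice_diff_at u x P X" and "e > 0"
  obtains Du d where "d > 0" and "Du x = P"
    and "\<And>y. y \<in> ball x d \<Longrightarrow> (u has_derivative (\<lambda>h. Du y *v h)) (at y)"
    and "\<And>y. y \<in> ball x d \<Longrightarrow> norm (Du y - Du x - hess_map X (y - x)) \<le> e * norm (y - x)"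
proof -
  obtain S Du where "open S" "x \<in> S" and du: "\<And>y. y \<in> S \<Longrightarrow> (u has_derivative (\<lambda>h. Du y *v h)) (at y)"
    and "Du x = P" and "(Du has_derivative hess_map X) (at x)"
    using assms(1) unfolding twice_diff_at_def hess_map_def by blast
  then obtain d1 where "d1 > 0"
    and d1: "\<And>y. norm (y - x) < d1 \<Longrightarrow> norm (Du y - Du x - hess_map X (y - x)) \<le> e * norm (y - x)"
    using assms(2) unfolding has_derivative_at_alt by blast
  obtain d2 where "d2 > 0" "ball x d2 \<subseteq> S"
    using \<open>open S\<close> \<open>x \<in> S\<close> open_contains_ball by blast
  show ?thesis
    by (rule that[of "min d1 d2" Du]) (use \<open>d1 > 0\<close> \<open>d2 > 0\<close> \<open>ball x d2 \<subseteq> S\<close> \<open>Du x = P\<close> in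
        \<open>auto intro!: du d1 simp: dist_norm norm_minus_commute\<close>)
qed

lemma has_derivative_along_line:
  fixes D :: "real^'n^'m"
  assumes "(u has_derivative (\<lambda>v. D *v v)) (at (a + t *\<^sub>R h))"
  shows "((\<lambda>t. u (a + t *\<^sub>R h)) has_derivative (\<lambda>s. s *\<^sub>R (D *v h))) (at t)"
proof -
  have "((\<lambda>t. a + t *\<^sub>R h) has_derivative (\<lambda>s. s *\<^sub>R h)) (at t)"
    by (auto intro!: derivative_eq_intros)
  from has_derivative_compose[OF this assms] show ?thesis
    by (simp add: matrix_vector_mult_scaleR)
qed

lemma has_derivative_taylor_path:
  fixes D :: "real^'n^'m"
  assumes "(u has_derivative (\<lambda>v. D *v v)) (at (a + t *\<^sub>R h))"
  shows "((\<lambda>t. u (a + t *\<^sub>R h) - t *\<^sub>R w - (t\<^sup>2 / 2) *\<^sub>R c)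
    has_derivative (\<lambda>s. s *\<^sub>R (D *v h - w - t *\<^sub>R c))) (at t)"
proof -
  have "((\<lambda>t. (t\<^sup>2 / 2) *\<^sub>R c) has_derivative (\<lambda>s. (s * t) *\<^sub>R c)) (at t)"
    by (auto intro!: derivative_eq_intros simp: power2_eq_square)
  from has_derivative_diff[OF has_derivative_diff[OF has_derivative_along_line[OF assms]
        has_derivative_scaleR_left[OF has_derivative_ident]] this]
  show ?thesis
    by (rule has_derivative_eq_rhs) (simp add: algebra_simps)
qed

lemma norm_diff_le_of_derivative_bound_01:
  fixes \<phi> :: "real \<Rightarrow> 'a::real_inner"
  assumes "\<And>t. t \<in> {0..1} \<Longrightarrow> (\<phi> has_derivative (\<lambda>s. s *\<^sub>R \<phi>' t)) (at t)"
    and "\<And>t. t \<in> {0..1} \<Longrightarrow> norm (\<phi>' t) \<le> B"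
  shows "norm (\<phi> 1 - \<phi> 0) \<le> B"
proof -
  have "continuous_on {0..1} \<phi>"
    by (meson continuous_at_imp_continuous_on assms(1) has_derivative_continuous)
  then obtain t where "t \<in> {0<..<1}" "norm (\<phi> 1 - \<phi> 0) \<le> norm (\<phi>' t)"
    using mvt_general[of 0 1 \<phi> "\<lambda>t s. s *\<^sub>R \<phi>' t"] assms(1) by force
  then show ?thesis
    using assms(2)[of t] by auto
qed

lemma taylor_remainder_le:
  fixes u :: "real^'n \<Rightarrow> real^'N"
  assumes du: "\<And>y. y \<in> ball x d \<Longrightarrow> (u has_derivative (\<lambda>h. Du y *v h)) (at y)"
    and hess: "\<And>y. y \<in> ball x d \<Longrightarrow> norm (Du y - Du x - hess_map X (y - x)) \<le> e * norm (y - x)"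
    and "norm (a - x) + norm h < d" and "e \<ge> 0"
  shows "norm (u (a + h) - u a - (Du x + hess_map X (a - x)) *v h - (1/2) *\<^sub>R contr X h)
    \<le> real CARD('N) * e * (norm (a - x) + norm h) * norm h"
proof -
  define \<phi> where "\<phi> t = u (a + t *\<^sub>R h) - t *\<^sub>R ((Du x + hess_map X (a - x)) *v h)
    - (t\<^sup>2 / 2) *\<^sub>R contr X h" for t
  define \<phi>' where "\<phi>' t = (Du (a + t *\<^sub>R h) - Du x - hess_map X (a + t *\<^sub>R h - x)) *v h" for t
  have near: "norm (a + t *\<^sub>R h - x) \<le> norm (a - x) + norm h" "a + t *\<^sub>R h \<in> ball x d"
    if "t \<in> {0..1}" for t
  proof -
    have "norm (a + t *\<^sub>R h - x) \<le> norm (a - x) + norm (t *\<^sub>R h)"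
      using norm_triangle_ineq[of "a - x" "t *\<^sub>R h"] by (simp add: algebra_simps)
    also have "norm (t *\<^sub>R h) \<le> norm h"
      using that by (simp add: mult_left_le_one_le)
    finally show "norm (a + t *\<^sub>R h - x) \<le> norm (a - x) + norm h"
      by simp
    with \<open>norm (a - x) + norm h < d\<close> show "a + t *\<^sub>R h \<in> ball x d"
      by (simp add: dist_norm norm_minus_commute)
  qed
  have "\<phi>' t = Du (a + t *\<^sub>R h) *v h - (Du x + hess_map X (a - x)) *v h - t *\<^sub>R contr X h" for t
    by (simp add: \<phi>'_def linear_add[OF linear_hess_map] linear_diff[OF linear_hess_map]
        linear_scale[OF linear_hess_map] hess_map_apply_self scaleR_matrix_vector_assoc[symmetric]
        algebra_simps)
  then have "(\<phi> has_derivative (\<lambda>s. s *\<^sub>R \<phi>' t)) (at t)" if "t \<in> {0..1}" for t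
    unfolding \<phi>_def using has_derivative_taylor_path[OF du[OF near(2)[OF that]]] by simp
  moreover have "norm (\<phi>' t) \<le> real CARD('N) * e * (norm (a - x) + norm h) * norm h"
    if "t \<in> {0..1}" for t
  proof -
    have "norm (Du (a + t *\<^sub>R h) - Du x - hess_map X (a + t *\<^sub>R h - x))
        \<le> e * (norm (a - x) + norm h)"
      using hess[OF near(2)[OF that]] mult_left_mono[OF near(1)[OF that] \<open>e \<ge> 0\<close>] by simp
    then show ?thesis
      unfolding \<phi>'_def
      by (intro order_trans[OF norm_matrix_vector_mult_le] mult_right_mono) (auto simp: mult.assoc)
  qed
  ultimately have "norm (\<phi> 1 - \<phi> 0) \<le> real CARD('N) * e * (norm (a - x) + norm h) * norm h"
    by (rule norm_diff_le_of_derivative_bound_01)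
  then show ?thesis
    by (simp add: \<phi>_def algebra_simps)
qed

lemma second_difference_le:
  fixes u :: "real^'n \<Rightarrow> real^'N"
  assumes du: "\<And>y. y \<in> ball x d \<Longrightarrow> (u has_derivative (\<lambda>h. Du y *v h)) (at y)"
    and hess: "\<And>y. y \<in> ball x d \<Longrightarrow> norm (Du y - Du x - hess_map X (y - x)) \<le> e * norm (y - x)"
    and "norm h \<le> s" and "norm k \<le> s" and "2 * s < d" and "e \<ge> 0"
  shows "norm (u (x + k + h) - u (x + k) - u (x + h) + u x - hess_map X k *v h)
    \<le> 3 * real CARD('N) * e * s\<^sup>2"
proof -
  define C where "C = real CARD('N)"
  have "C \<ge> 0"
    by (simp add: C_def)
  have "s \<ge> 0" and "norm h \<le> 2 * s"
    using \<open>norm h \<le> s\<close> \<open>norm k \<le> s\<close> norm_ge_zero[of k] by linarith+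
  have "norm (u (x + k + h) - u (x + k) - (Du x + hess_map X k) *v h - (1/2) *\<^sub>R contr X h)
      \<le> C * e * (norm k + norm h) * norm h"
    using taylor_remainder_le[OF du hess, where d = d and a = "x + k" and h = h] \<open>norm h \<le> s\<close> \<open>norm k \<le> s\<close> assms(5,6)
    by (simp add: C_def)
  also have "\<dots> \<le> C * e * (2 * s) * s"
    using \<open>norm h \<le> s\<close> \<open>norm k \<le> s\<close> \<open>s \<ge> 0\<close> \<open>C \<ge> 0\<close> \<open>e \<ge> 0\<close>
    by (intro mult_mono mult_left_mono) auto
  finally have shifted: "norm (u (x + k + h) - u (x + k) - (Du x + hess_map X k) *v h
      - (1/2) *\<^sub>R contr X h) \<le> 2 * C * e * s\<^sup>2"
    by (simp add: power2_eq_square mult_ac)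
  have "norm (u (x + h) - u x - Du x *v h - (1/2) *\<^sub>R contr X h) \<le> C * e * norm h * norm h"
    using taylor_remainder_le[OF du hess, where d = d and a = x and h = h] \<open>norm h \<le> 2 * s\<close> assms(5,6)
    by (simp add: C_def linear_0[OF linear_hess_map])
  also have "\<dots> \<le> C * e * s * s"
    using \<open>norm h \<le> s\<close> \<open>s \<ge> 0\<close> \<open>C \<ge> 0\<close> \<open>e \<ge> 0\<close> by (intro mult_mono mult_left_mono) auto
  finally have centred: "norm (u (x + h) - u x - Du x *v h - (1/2) *\<^sub>R contr X h) \<le> C * e * s\<^sup>2"
    by (simp add: power2_eq_square)
  have "u (x + k + h) - u (x + k) - u (x + h) + u x - hess_map X k *v h
      = (u (x + k + h) - u (x + k) - (Du x + hess_map X k) *v h - (1/2) *\<^sub>R contr X h)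
        - (u (x + h) - u x - Du x *v h - (1/2) *\<^sub>R contr X h)"
    by (simp add: algebra_simps)
  also have "norm \<dots> \<le> norm (u (x + k + h) - u (x + k) - (Du x + hess_map X k) *v h
      - (1/2) *\<^sub>R contr X h) + norm (u (x + h) - u x - Du x *v h - (1/2) *\<^sub>R contr X h)"
    by (rule norm_triangle_ineq4)
  also have "\<dots> \<le> 2 * C * e * s\<^sup>2 + C * e * s\<^sup>2"
    using shifted centred by (rule add_mono)
  finally show ?thesis
    by (simp add: C_def algebra_simps)
qed

lemma twice_diff_at_taylor:
  fixes u :: "real^'n \<Rightarrow> real^'N"
  assumes "twice_diff_at u x P X" and "e > 0"
  shows "\<exists>d>0. \<forall>h. norm h < d \<longrightarrow>
    norm (u (x + h) - u x - P *v h - (1/2) *\<^sub>R contr X h) \<le> e * (norm h)\<^sup>2"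
proof -
  define C where "C = real CARD('N)"
  have "C > 0"
    by (simp add: C_def)
  with assms obtain Du d where "d > 0" "Du x = P"
    and du: "\<And>y. y \<in> ball x d \<Longrightarrow> (u has_derivative (\<lambda>h. Du y *v h)) (at y)"
    and hess: "\<And>y. y \<in> ball x d \<Longrightarrow> norm (Du y - Du x - hess_map X (y - x)) \<le> e / C * norm (y - x)"
    by (metis twice_diff_at_ball_estimate divide_pos_pos)
  have "norm (u (x + h) - u x - P *v h - (1/2) *\<^sub>R contr X h) \<le> e * (norm h)\<^sup>2" if "norm h < d" for h
    using taylor_remainder_le[OF du hess, where d = d and a = x and h = h] that \<open>Du x = P\<close> \<open>C > 0\<close> \<open>e > 0\<close>
    by (simp add: C_def linear_0[OF linear_hess_map] power2_eq_square)
  with \<open>d > 0\<close> show ?thesis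
    by blast
qed

text \<open>Schwarz's theorem: the second difference \<open>u(x+h+k) - u(x+h) - u(x+k) + u(x)\<close> is
  symmetric in \<open>h, k\<close> and approximates both \<open>X:h\<otimes>k\<close> and \<open>X:k\<otimes>h\<close>.\<close>
lemma hess_map_swap_le:
  fixes u :: "real^'n \<Rightarrow> real^'N"
  assumes du: "\<And>y. y \<in> ball x d \<Longrightarrow> (u has_derivative (\<lambda>h. Du y *v h)) (at y)"
    and hess: "\<And>y. y \<in> ball x d \<Longrightarrow> norm (Du y - Du x - hess_map X (y - x)) \<le> e * norm (y - x)"
    and "norm h \<le> s" and "norm k \<le> s" and "2 * s < d" and "e \<ge> 0"
  shows "norm (hess_map X k *v h - hess_map X h *v k) \<le> 6 * real CARD('N) * e * s\<^sup>2"
proof -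
  define \<Delta> where "\<Delta> = u (x + k + h) - u (x + k) - u (x + h) + u x"
  have "x + h + k = x + k + h"
    by (simp add: add_ac)
  then have swap: "u (x + h + k) - u (x + h) - u (x + k) + u x = \<Delta>"
    unfolding \<Delta>_def by (simp add: algebra_simps)
  have "norm (\<Delta> - hess_map X k *v h) \<le> 3 * real CARD('N) * e * s\<^sup>2"
    using second_difference_le[OF du hess assms(3-6)] by (simp add: \<Delta>_def)
  moreover have "norm (\<Delta> - hess_map X h *v k) \<le> 3 * real CARD('N) * e * s\<^sup>2"
    using second_difference_le[OF du hess assms(4,3,5,6)] unfolding swap .
  ultimately show ?thesis
    using norm_triangle_ineq4[of "\<Delta> - hess_map X h *v k" "\<Delta> - hess_map X k *v h"] by simp
qed

lemma twice_diff_at_sym_arr: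
  fixes u :: "real^'n \<Rightarrow> real^'N"
  assumes "twice_diff_at u x P X"
  shows "sym_arr X"
  unfolding sym_arr_def
proof (intro allI)
  fix a p q
  define C where "C = real CARD('N)"
  have small: "norm ((\<chi> a. X$a$p$q) - (\<chi> a. X$a$q$p)) \<le> 0 + \<epsilon>" if "\<epsilon> > 0" for \<epsilon>
  proof -
    have "\<epsilon> / (6 * C) > 0"
      using \<open>\<epsilon> > 0\<close> by (simp add: C_def)
    then obtain Du d where "d > 0"
      and du: "\<And>y. y \<in> ball x d \<Longrightarrow> (u has_derivative (\<lambda>h. Du y *v h)) (at y)"
      and hess: "\<And>y. y \<in> ball x d \<Longrightarrow>
        norm (Du y - Du x - hess_map X (y - x)) \<le> \<epsilon> / (6 * C) * norm (y - x)"
      using twice_diff_at_ball_estimate[OF assms] by metis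
    define s where "s = d / 4"
    define h where "h = s *\<^sub>R axis p (1::real)"
    define k where "k = s *\<^sub>R axis q (1::real)"
    have "norm h \<le> s" "norm k \<le> s" and "2 * s < d"
      using \<open>d > 0\<close> by (auto simp: h_def k_def s_def)
    from hess_map_swap_le[OF du hess this] \<open>\<epsilon> / (6 * C) > 0\<close>
    have "norm (hess_map X k *v h - hess_map X h *v k) \<le> \<epsilon> * s\<^sup>2"
      by (simp add: C_def)
    moreover have "hess_map X k *v h - hess_map X h *v k
        = s\<^sup>2 *\<^sub>R ((\<chi> a. X$a$p$q) - (\<chi> a. X$a$q$p))"
      by (simp add: h_def k_def linear_scale[OF linear_hess_map] hess_map_axis matrix_vector_mult_scaleR
          scaleR_matrix_vector_assoc[symmetric] power2_eq_square scaleR_diff_right)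
    ultimately show ?thesis
      using \<open>d > 0\<close> by (simp add: s_def mult.commute)
  qed
  then have "norm ((\<chi> a. X$a$p$q) - (\<chi> a. X$a$q$p)) \<le> 0"
    by (rule field_le_epsilon)
  then show "X$a$p$q = X$a$q$p"
    by (simp add: vec_eq_iff)
qed

definition clip :: "real \<Rightarrow> 'a::real_normed_vector \<Rightarrow> 'a" where
  "clip d h = (d / max d (norm h)) *\<^sub>R h"

lemma norm_clip_le: "d > 0 \<Longrightarrow> norm (clip d h) \<le> d"
  by (auto simp: clip_def max_def divide_le_eq field_simps)

lemma clip_eq_self: "d > 0 \<Longrightarrow> norm h \<le> d \<Longrightarrow> clip d h = h"
  by (simp add: clip_def max_def)

lemma clip_eq_0_iff: "d > 0 \<Longrightarrow> clip d h = 0 \<longleftrightarrow> h = 0"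
  by (simp add: clip_def max_def)

lemma continuous_on_clip: "d > 0 \<Longrightarrow> continuous_on S (clip d)"
  unfolding clip_def by (intro continuous_intros) auto

lemma tendsto_remainder_quotient_0:
  assumes small: "\<And>e. e > 0 \<Longrightarrow> \<exists>d>0. \<forall>h. norm h < d \<longrightarrow> norm (r (x + h)) \<le> e * (norm h)\<^sup>2"
  shows "((\<lambda>h. norm (r (x + h)) / (norm h)\<^sup>2) \<longlongrightarrow> 0) (at 0)"
proof (rule tendstoI)
  fix e :: real
  assume "e > 0"
  then obtain d where "d > 0" and d: "\<And>h. norm h < d \<Longrightarrow> norm (r (x + h)) \<le> e / 2 * (norm h)\<^sup>2"
    using small[of "e / 2"] by auto
  have "dist (norm (r (x + h)) / (norm h)\<^sup>2) 0 < e" if "h \<noteq> 0" "norm h < d" for h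
  proof -
    have "norm (r (x + h)) / (norm h)\<^sup>2 \<le> e / 2 * (norm h)\<^sup>2 / (norm h)\<^sup>2"
      using that d[of h] by (intro divide_right_mono) auto
    also have "\<dots> = e / 2"
      using that by simp
    finally have "norm (r (x + h)) / (norm h)\<^sup>2 \<le> e / 2" .
    moreover have "dist (norm (r (x + h)) / (norm h)\<^sup>2) 0 = norm (r (x + h)) / (norm h)\<^sup>2"
      by (simp add: dist_real_def)
    ultimately show ?thesis
      using \<open>e > 0\<close> by linarith
  qed
  then show "eventually (\<lambda>h. dist (norm (r (x + h)) / (norm h)\<^sup>2) 0 < e) (at 0)"
    unfolding eventually_at using \<open>d > 0\<close> by (intro exI[of _ d]) auto
qed

text \<open>Clipping keeps \<open>x + clip d h\<close> inside \<open>\<Omega>\<close>, so the gauge is defined and continuous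
  on all of \<open>UNIV - {0}\<close>.\<close>
lemma continuous_gauge_of_remainder:
  fixes r :: "'a::real_normed_vector \<Rightarrow> 'b::real_normed_vector"
  assumes "open \<Omega>" and "x \<in> \<Omega>" and "continuous_on \<Omega> r"
    and small: "\<And>e. e > 0 \<Longrightarrow> \<exists>d>0. \<forall>h. norm h < d \<longrightarrow> norm (r (x + h)) \<le> e * (norm h)\<^sup>2"
  obtains g d where "continuous_on (UNIV - {0}) g" and "(g \<longlongrightarrow> 0) (at 0)" and "d > 0"
    and "\<And>z. z \<in> \<Omega> \<Longrightarrow> z \<noteq> x \<Longrightarrow> dist z x < d \<Longrightarrow> norm (r z) = (norm (z - x))\<^sup>2 * g (z - x)"
proof -
  obtain d where "d > 0" and "cball x d \<subseteq> \<Omega>"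
    using assms(1,2) open_contains_cball by blast
  define g where "g h = norm (r (x + clip d h)) / (norm (clip d h))\<^sup>2" for h
  have "x + clip d h \<in> \<Omega>" for h
    using norm_clip_le[OF \<open>d > 0\<close>, of h] \<open>cball x d \<subseteq> \<Omega>\<close> by (auto simp: dist_norm)
  then have "continuous_on (UNIV - {0}) (\<lambda>h. r (x + clip d h))"
    by (intro continuous_on_compose2[OF assms(3) continuous_on_add[OF continuous_on_const
          continuous_on_clip[OF \<open>d > 0\<close>]]]) auto
  then have g_cont: "continuous_on (UNIV - {0}) g"
    unfolding g_def using \<open>d > 0\<close>
    by (intro continuous_intros continuous_on_clip) (auto simp: clip_eq_0_iff)
  have "eventually (\<lambda>h. norm (r (x + h)) / (norm h)\<^sup>2 = g h) (at 0)"
    unfolding eventually_at using \<open>d > 0\<close>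
    by (intro exI[of _ d]) (auto simp: g_def clip_eq_self)
  from Lim_transform_eventually[OF tendsto_remainder_quotient_0[OF small] this]
  have g_lim: "(g \<longlongrightarrow> 0) (at 0)" .
  show ?thesis
  proof (rule that[OF g_cont g_lim \<open>d > 0\<close>])
    fix z
    assume "z \<noteq> x" "dist z x < d"
    then show "norm (r z) = (norm (z - x))\<^sup>2 * g (z - x)"
      using clip_eq_self[OF \<open>d > 0\<close>, of "z - x"] by (simp add: g_def dist_norm)
  qed
qed

lemma twice_diff_at_jet2:
  fixes u :: "real^'n \<Rightarrow> real^'N"
  assumes "open \<Omega>" and "continuous_on \<Omega> u" and "x \<in> \<Omega>" and "twice_diff_at u x P X"
    and "norm \<xi> \<le> 1"
  shows "jet2 u \<Omega> \<xi> x P X"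
proof -
  define r where "r z = u z - u x - P *v (z - x) - (1/2) *\<^sub>R contr X (z - x)" for z
  have "continuous_on \<Omega> (\<lambda>z. P *v (z - x))"
    by (rule linear_continuous_on_compose[OF _ matrix_vector_mul_linear]) (intro continuous_intros)
  then have "continuous_on \<Omega> r"
    unfolding r_def contr_def by (intro continuous_intros continuous_on_vec_lambda assms(2))
  moreover have "\<exists>d>0. \<forall>h. norm h < d \<longrightarrow> norm (r (x + h)) \<le> e * (norm h)\<^sup>2" if "e > 0" for e
    using twice_diff_at_taylor[OF assms(4) that] by (simp add: r_def)
  ultimately obtain g d where "continuous_on (UNIV - {0}) g" and "(g \<longlongrightarrow> 0) (at 0)" and "d > 0"
    and g: "\<And>z. z \<in> \<Omega> \<Longrightarrow> z \<noteq> x \<Longrightarrow> dist z x < d \<Longrightarrow> norm (r z) = (norm (z - x))\<^sup>2 * g (z - x)"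
    using continuous_gauge_of_remainder[OF assms(1,3)] by metis
  define T where "T h = g h *\<^sub>R (mat 1 :: real^'N^'N)" for h
  have T_cont: "continuous_on (UNIV - {0}) T"
    unfolding T_def using \<open>continuous_on (UNIV - {0}) g\<close> by (intro continuous_intros)
  have T_sym: "symmetric_mat (T h)" for h
    by (simp add: T_def symmetric_mat_def transpose_scalar)
  have T_lim: "((\<lambda>h. norm (T h)) \<longlongrightarrow> 0) (at 0)"
    using tendsto_mult_left_zero[OF tendsto_rabs_zero[OF \<open>(g \<longlongrightarrow> 0) (at 0)\<close>]]
    by (simp add: T_def)
  have T_dominates: "mat_le (vee \<xi> (r z)) ((norm (z - x))\<^sup>2 *\<^sub>R T (z - x))"
    if "z \<in> \<Omega>" "z \<noteq> x" "dist z x < d" for z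
    using mat_le_vee_scaled_id[OF assms(5), of "r z"] g[OF that] by (simp add: T_def)
  show ?thesis
    unfolding jet2_def
    using twice_diff_at_sym_arr[OF assms(4)] T_cont T_sym T_lim \<open>d > 0\<close> T_dominates[unfolded r_def]
    by (intro conjI exI[of _ T] exI[of _ d]) auto
qed

lemma jet2_imp_cjet2:
  assumes "jet2 u \<Omega> \<xi> x P X" and "x \<in> \<Omega>" and "norm \<xi> = 1"
  shows "cjet2 u \<Omega> \<xi> x P X"
  unfolding cjet2_def using assms
  by (intro exI[of _ "\<lambda>m. \<xi>"] exI[of _ "\<lambda>m. x"] exI[of _ "\<lambda>m. P"] exI[of _ "\<lambda>m. X"]) simp

definition env_ball :: "(real^'n) set \<Rightarrow> real^'n \<Rightarrow> real^'N \<Rightarrow> real^'n^'N \<Rightarrow> real^'n^'n^'N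
    \<Rightarrow> real \<Rightarrow> ((real^'n) \<times> (real^'N) \<times> (real^'n^'N) \<times> (real^'n^'n^'N)) set" where
  "env_ball \<Omega> x \<eta> P X \<epsilon> = {(y, \<theta>, Q, Y). y \<in> \<Omega> \<and> sym_arr Y \<and>
     norm (x - y) + norm (\<eta> - \<theta>) + norm (P - Q) + norm (X - Y) \<le> \<epsilon>}"

lemma xi_env_eq_Limsup_env_ball:
  "xi_env F \<Omega> \<xi> x \<eta> P X = Limsup (at_right 0) (\<lambda>\<epsilon>. SUP q \<in> env_ball \<Omega> x \<eta> P X \<epsilon>.
     ereal (\<xi> \<bullet> (case q of (y, \<theta>, Q, Y) \<Rightarrow> F y \<theta> Q Y)))"
  by (simp add: xi_env_def env_ball_def)

lemma env_ball_subset: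
  assumes "q \<in> env_ball \<Omega> x \<eta> P X \<epsilon>"
  shows "q \<in> dom_F \<Omega>" and "dist q (x, \<eta>, P, X) \<le> \<epsilon>"
proof -
  obtain y \<theta> Q Y where q: "q = (y, \<theta>, Q, Y)"
    by (cases q) auto
  with assms show "q \<in> dom_F \<Omega>"
    by (simp add: env_ball_def dom_F_def)
  have "norm (y - x, \<theta> - \<eta>, Q - P, Y - X) \<le> norm (y - x) + norm (\<theta> - \<eta>, Q - P, Y - X)"
    and "norm (\<theta> - \<eta>, Q - P, Y - X) \<le> norm (\<theta> - \<eta>) + norm (Q - P, Y - X)"
    and "norm (Q - P, Y - X) \<le> norm (Q - P) + norm (Y - X)"
    by (rule norm_Pair_le)+
  with assms show "dist q (x, \<eta>, P, X) \<le> \<epsilon>"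
    by (simp add: q env_ball_def dist_norm norm_minus_commute)
qed

lemma xi_env_le_of_continuous:
  assumes "F_continuous F \<Omega>" and "x \<in> \<Omega>" and "sym_arr X"
  shows "xi_env F \<Omega> \<xi> x \<eta> P X \<le> ereal (\<xi> \<bullet> F x \<eta> P X)"
  unfolding xi_env_eq_Limsup_env_ball
proof (rule ereal_le_epsilon2)
  fix \<delta> :: real
  assume "\<delta> > 0"
  let ?G = "\<lambda>q. \<xi> \<bullet> (case q of (y, \<theta>, Q, Y) \<Rightarrow> F y \<theta> Q Y)"
  have "continuous_on (dom_F \<Omega>) ?G"
    using assms(1) unfolding F_continuous_def by (intro continuous_intros) (simp add: case_prod_unfold)
  moreover have "(x, \<eta>, P, X) \<in> dom_F \<Omega>"
    using assms(2,3) by (simp add: dom_F_def)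
  ultimately obtain \<rho> where "\<rho> > 0"
    and \<rho>: "\<And>q. q \<in> dom_F \<Omega> \<Longrightarrow> dist q (x, \<eta>, P, X) < \<rho> \<Longrightarrow> dist (?G q) (?G (x, \<eta>, P, X)) < \<delta>"
    using \<open>\<delta> > 0\<close> unfolding continuous_on_iff by blast
  have "(SUP q \<in> env_ball \<Omega> x \<eta> P X \<epsilon>. ereal (?G q)) \<le> ereal (\<xi> \<bullet> F x \<eta> P X + \<delta>)"
    if "\<epsilon> < \<rho>" for \<epsilon>
  proof (rule SUP_least)
    fix q
    assume "q \<in> env_ball \<Omega> x \<eta> P X \<epsilon>"
    then have "q \<in> dom_F \<Omega>" "dist q (x, \<eta>, P, X) < \<rho>"
      using env_ball_subset[of q] that by fastforce+
    from \<rho>[OF this] show "ereal (?G q) \<le> ereal (\<xi> \<bullet> F x \<eta> P X + \<delta>)"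
      by (simp add: dist_real_def)
  qed
  then have "eventually (\<lambda>\<epsilon>. (SUP q \<in> env_ball \<Omega> x \<eta> P X \<epsilon>. ereal (?G q))
      \<le> ereal (\<xi> \<bullet> F x \<eta> P X + \<delta>)) (at_right 0)"
    unfolding eventually_at_right_field using \<open>\<rho> > 0\<close> by blast
  then show "Limsup (at_right 0) (\<lambda>\<epsilon>. SUP q \<in> env_ball \<Omega> x \<eta> P X \<epsilon>. ereal (?G q))
      \<le> ereal (\<xi> \<bullet> F x \<eta> P X) + ereal \<delta>"
    by (simp add: Limsup_bounded)
qed

lemma sym_arr_limit:
  assumes "Xs \<longlonglongrightarrow> X" and "\<And>m. sym_arr (Xs m)"
  shows "sym_arr X"
  unfolding sym_arr_def
proof (intro allI)
  fix a i j
  have "(\<lambda>m. Xs m $ a $ j $ i) \<longlonglongrightarrow> X $ a $ j $ i"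
    and "(\<lambda>m. Xs m $ a $ i $ j) \<longlonglongrightarrow> X $ a $ i $ j"
    by (intro tendsto_vec_nth assms(1))+
  moreover have "Xs m $ a $ j $ i = Xs m $ a $ i $ j" for m
    using assms(2) by (simp add: sym_arr_def)
  ultimately show "X $ a $ i $ j = X $ a $ j $ i"
    using LIMSEQ_unique by force
qed

lemma locally_bounded_eventually_bounded:
  assumes "locally_bounded F \<Omega>" and "p \<in> dom_F \<Omega>" and "qs \<longlonglongrightarrow> p"
    and "\<And>m. qs m \<in> dom_F \<Omega>"
  obtains M where "eventually (\<lambda>m. norm (case qs m of (y, \<theta>, Q, Y) \<Rightarrow> F y \<theta> Q Y) \<le> M) sequentially"
proof -
  obtain r M where "r > 0" and M: "\<And>q. q \<in> dom_F \<Omega> \<Longrightarrow> dist q p < r \<Longrightarrow>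
      norm (case q of (y, \<theta>, Q, Y) \<Rightarrow> F y \<theta> Q Y) \<le> M"
    using assms(1,2) unfolding locally_bounded_def by metis
  from tendstoD[OF assms(3) \<open>r > 0\<close>]
  have "eventually (\<lambda>m. norm (case qs m of (y, \<theta>, Q, Y) \<Rightarrow> F y \<theta> Q Y) \<le> M) sequentially"
    by (rule eventually_mono) (rule M[OF assms(4)])
  then show ?thesis
    by (rule that)
qed

lemma tendsto_inner_zero_of_bounded:
  fixes G :: "'a \<Rightarrow> 'b::real_inner"
  assumes "(\<xi>s \<longlongrightarrow> \<xi>) F" and "eventually (\<lambda>m. norm (G m) \<le> M) F"
  shows "((\<lambda>m. (\<xi> - \<xi>s m) \<bullet> G m) \<longlongrightarrow> 0) F"
proof (rule Lim_null_comparison)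
  show "eventually (\<lambda>m. norm ((\<xi> - \<xi>s m) \<bullet> G m) \<le> norm (\<xi> - \<xi>s m) * M) F"
    using assms(2)
  proof (rule eventually_mono)
    fix m
    assume "norm (G m) \<le> M"
    have "norm ((\<xi> - \<xi>s m) \<bullet> G m) \<le> norm (\<xi> - \<xi>s m) * norm (G m)"
      by (simp add: Cauchy_Schwarz_ineq2)
    also have "\<dots> \<le> norm (\<xi> - \<xi>s m) * M"
      using \<open>norm (G m) \<le> M\<close> by (simp add: mult_left_mono)
    finally show "norm ((\<xi> - \<xi>s m) \<bullet> G m) \<le> norm (\<xi> - \<xi>s m) * M" .
  qed
  show "((\<lambda>m. norm (\<xi> - \<xi>s m) * M) \<longlongrightarrow> 0) F"
    using tendsto_diff[OF tendsto_const[of \<xi>] assms(1)]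
    by (intro tendsto_mult_left_zero tendsto_norm_zero) simp
qed

lemma eventually_in_env_ball:
  assumes "\<And>m. ys m \<in> \<Omega>" and "\<And>m. sym_arr (Ys m)"
    and "ys \<longlonglongrightarrow> x" and "\<theta>s \<longlonglongrightarrow> \<eta>" and "Qs \<longlonglongrightarrow> P" and "Ys \<longlonglongrightarrow> X" and "\<epsilon> > 0"
  shows "eventually (\<lambda>m. (ys m, \<theta>s m, Qs m, Ys m) \<in> env_ball \<Omega> x \<eta> P X \<epsilon>) sequentially"
proof -
  have "(\<lambda>m. norm (x - ys m) + norm (\<eta> - \<theta>s m) + norm (P - Qs m) + norm (X - Ys m))
      \<longlonglongrightarrow> norm (x - x) + norm (\<eta> - \<eta>) + norm (P - P) + norm (X - X)"
    by (intro tendsto_intros assms(3-6))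
  from order_tendstoD(2)[OF this[simplified] \<open>\<epsilon> > 0\<close>] show ?thesis
    by (rule eventually_mono) (use assms(1,2) in \<open>simp add: env_ball_def\<close>)
qed

lemma SUP_ereal_nonneg_if_approx:
  assumes "\<And>\<delta>. \<delta> > 0 \<Longrightarrow> \<exists>q\<in>A. - \<delta> \<le> f q"
  shows "0 \<le> (SUP q \<in> A. ereal (f q))"
proof (rule ereal_le_epsilon2)
  fix \<delta> :: real
  assume "\<delta> > 0"
  then obtain q where "q \<in> A" and "- \<delta> \<le> f q"
    using assms by blast
  then have "ereal (- \<delta>) \<le> ereal (f q)"
    by simp
  also have "\<dots> \<le> (SUP q \<in> A. ereal (f q))"
    by (rule SUP_upper) fact
  finally have "ereal (- \<delta>) \<le> (SUP q \<in> A. ereal (f q))" .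
  then show "0 \<le> (SUP q \<in> A. ereal (f q)) + ereal \<delta>"
    by (cases "SUP q \<in> A. ereal (f q)") auto
qed

lemma xi_env_nonneg_of_limit:
  assumes "locally_bounded F \<Omega>" and "x \<in> \<Omega>" and "sym_arr X"
    and "\<And>m. ys m \<in> \<Omega>" and "\<And>m. sym_arr (Ys m)"
    and "ys \<longlonglongrightarrow> x" and "\<theta>s \<longlonglongrightarrow> \<eta>" and "Qs \<longlonglongrightarrow> P" and "Ys \<longlonglongrightarrow> X" and "\<xi>s \<longlonglongrightarrow> \<xi>"
    and nonneg: "\<And>m. 0 \<le> \<xi>s m \<bullet> F (ys m) (\<theta>s m) (Qs m) (Ys m)"
  shows "0 \<le> xi_env F \<Omega> \<xi> x \<eta> P X"
proof -
  define q where "q m = (ys m, \<theta>s m, Qs m, Ys m)" for m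
  define G where "G m = F (ys m) (\<theta>s m) (Qs m) (Ys m)" for m
  have "(x, \<eta>, P, X) \<in> dom_F \<Omega>" and q_dom: "q m \<in> dom_F \<Omega>" for m
    using assms(2-5) by (simp_all add: q_def dom_F_def)
  moreover have "q \<longlonglongrightarrow> (x, \<eta>, P, X)"
    unfolding q_def by (intro tendsto_Pair assms(6-9))
  ultimately obtain M
    where "eventually (\<lambda>m. norm (case q m of (y, \<theta>, Q, Y) \<Rightarrow> F y \<theta> Q Y) \<le> M) sequentially"
    using locally_bounded_eventually_bounded[OF assms(1)] q_dom by blast
  then have "eventually (\<lambda>m. norm (G m) \<le> M) sequentially"
    by (simp add: q_def G_def)
  from tendsto_inner_zero_of_bounded[OF assms(10) this]
  have error: "(\<lambda>m. (\<xi> - \<xi>s m) \<bullet> G m) \<longlonglongrightarrow> 0" .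
  have "0 \<le> (SUP q \<in> env_ball \<Omega> x \<eta> P X \<epsilon>. ereal (\<xi> \<bullet> (case q of (y, \<theta>, Q, Y) \<Rightarrow> F y \<theta> Q Y)))"
    if "\<epsilon> > 0" for \<epsilon>
  proof (rule SUP_ereal_nonneg_if_approx)
    fix \<delta> :: real
    assume "\<delta> > 0"
    from eventually_in_env_ball[OF assms(4-9) \<open>\<epsilon> > 0\<close>] order_tendstoD(1)[OF error, of "- \<delta>"] \<open>\<delta> > 0\<close>
    have "eventually (\<lambda>m. q m \<in> env_ball \<Omega> x \<eta> P X \<epsilon> \<and> - \<delta> < (\<xi> - \<xi>s m) \<bullet> G m) sequentially"
      unfolding q_def by (intro eventually_conj) simp_all
    then obtain m where "q m \<in> env_ball \<Omega> x \<eta> P X \<epsilon>" and "- \<delta> < (\<xi> - \<xi>s m) \<bullet> G m"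
      unfolding eventually_sequentially by blast
    moreover have "\<xi> \<bullet> G m = \<xi>s m \<bullet> G m + (\<xi> - \<xi>s m) \<bullet> G m"
      by (simp add: inner_diff_left)
    ultimately show "\<exists>q\<in>env_ball \<Omega> x \<eta> P X \<epsilon>. - \<delta> \<le> \<xi> \<bullet> (case q of (y, \<theta>, Q, Y) \<Rightarrow> F y \<theta> Q Y)"
      using nonneg[of m] by (intro bexI[of _ "q m"]) (simp_all add: q_def G_def)
  qed
  then have "eventually (\<lambda>\<epsilon>. 0 \<le> (SUP q \<in> env_ball \<Omega> x \<eta> P X \<epsilon>.
      ereal (\<xi> \<bullet> (case q of (y, \<theta>, Q, Y) \<Rightarrow> F y \<theta> Q Y)))) (at_right 0)"
    unfolding eventually_at_right_field by (intro exI[of _ 1]) auto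
  then show ?thesis
    unfolding xi_env_eq_Limsup_env_ball by (rule le_Limsup[OF trivial_limit_at_right_real])
qed

lemma inner_mult_diff_le_of_mat_le_vee:
  fixes \<zeta> J R v :: "real^'N" and T :: "real^'N^'N"
  assumes "mat_le (vee \<zeta> J) (s *\<^sub>R T)" and "norm T \<le> e" and "norm R \<le> e * s"
    and "norm \<zeta> \<le> 1" and "s \<ge> 0"
  shows "(\<zeta> \<bullet> v) * ((J - R) \<bullet> v) \<le> (real CARD('N) + 1) * e * s * (norm v)\<^sup>2"
proof -
  define C where "C = real CARD('N)"
  have "(\<zeta> \<bullet> v) * (J \<bullet> v) \<le> s * (v \<bullet> (T *v v))"
    using assms(1) unfolding mat_le_def by (simp add: quadratic_form_vee scaleR_matrix_vector_assoc[symmetric])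
  also have "\<dots> \<le> s * (C * e * (norm v)\<^sup>2)"
  proof (rule mult_left_mono)
    have "v \<bullet> (T *v v) \<le> C * norm T * (norm v)\<^sup>2"
      unfolding C_def by (rule quadratic_form_le)
    also have "\<dots> \<le> C * e * (norm v)\<^sup>2"
      using assms(2) by (intro mult_right_mono mult_left_mono) (auto simp: C_def)
    finally show "v \<bullet> (T *v v) \<le> C * e * (norm v)\<^sup>2" .
  qed (rule assms(5))
  finally have J_le: "(\<zeta> \<bullet> v) * (J \<bullet> v) \<le> C * e * s * (norm v)\<^sup>2"
    by (simp add: mult_ac)
  have "- ((\<zeta> \<bullet> v) * (R \<bullet> v)) \<le> \<bar>\<zeta> \<bullet> v\<bar> * \<bar>R \<bullet> v\<bar>"
    by (simp add: abs_mult[symmetric])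
  also have "\<dots> \<le> (norm \<zeta> * norm v) * (norm R * norm v)"
    by (intro mult_mono Cauchy_Schwarz_ineq2) auto
  also have "\<dots> \<le> (1 * norm v) * (e * s * norm v)"
    using assms(3,4) by (intro mult_mono mult_right_mono) auto
  finally have R_le: "- ((\<zeta> \<bullet> v) * (R \<bullet> v)) \<le> e * s * (norm v)\<^sup>2"
    by (simp add: power2_eq_square mult_ac)
  show ?thesis
    using J_le R_le by (simp add: C_def algebra_simps)
qed

lemma jet2_minus_taylor_le:
  fixes u :: "real^'n \<Rightarrow> real^'N"
  assumes "open \<Omega>" and "y \<in> \<Omega>" and "twice_diff_at u y P0 Y" and "jet2 u \<Omega> \<zeta> y Q Z"
    and "norm \<zeta> \<le> 1" and "\<epsilon> > 0"
  shows "eventually (\<lambda>h. (\<zeta> \<bullet> v) * (((P0 - Q) *v h + (1/2) *\<^sub>R contr (Y - Z) h) \<bullet> v)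
    \<le> \<epsilon> * (norm h)\<^sup>2) (at 0)"
proof -
  obtain T \<rho> where T_lim: "((\<lambda>h. norm (T h)) \<longlongrightarrow> 0) (at 0)" and "\<rho> > 0"
    and jet: "\<And>z. z \<in> \<Omega> \<Longrightarrow> z \<noteq> y \<Longrightarrow> dist z y < \<rho> \<Longrightarrow>
      mat_le (vee \<zeta> (u z - u y - Q *v (z - y) - (1/2) *\<^sub>R contr Z (z - y))) ((norm (z - y))\<^sup>2 *\<^sub>R T (z - y))"
    using assms(4) unfolding jet2_def by metis
  define C where "C = real CARD('N) + 1"
  define e where "e = \<epsilon> / (C * ((norm v)\<^sup>2 + 1))"
  have "C > 0" and "(norm v)\<^sup>2 + 1 > 0"
    by (auto simp: C_def add_nonneg_pos)
  then have "e > 0" and "C * e * ((norm v)\<^sup>2 + 1) = \<epsilon>"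
    using \<open>\<epsilon> > 0\<close> by (simp_all add: e_def)
  moreover have "C * e > 0"
    using \<open>C > 0\<close> \<open>e > 0\<close> by simp
  ultimately have e_small: "C * e * (norm v)\<^sup>2 \<le> \<epsilon>"
    by (simp add: distrib_left)
  obtain d where "d > 0" "ball y d \<subseteq> \<Omega>"
    using assms(1,2) open_contains_ball by blast
  obtain d' where "d' > 0" and taylor: "\<And>h. norm h < d' \<Longrightarrow>
      norm (u (y + h) - u y - P0 *v h - (1/2) *\<^sub>R contr Y h) \<le> e * (norm h)\<^sup>2"
    using twice_diff_at_taylor[OF assms(3) \<open>e > 0\<close>] by blast
  have "eventually (\<lambda>h. dist (norm (T h)) 0 < e) (at 0)"
    by (rule tendstoD[OF T_lim \<open>e > 0\<close>])
  moreover have "eventually (\<lambda>h. h \<noteq> 0 \<and> norm h < min (min d d') \<rho>) (at 0)"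
    unfolding eventually_at using \<open>d > 0\<close> \<open>d' > 0\<close> \<open>\<rho> > 0\<close>
    by (intro exI[of _ "min (min d d') \<rho>"]) auto
  ultimately show ?thesis
  proof eventually_elim
    case (elim h)
    have "y + h \<in> \<Omega>"
      using elim \<open>ball y d \<subseteq> \<Omega>\<close> by (auto simp: dist_norm)
    with elim have "mat_le (vee \<zeta> (u (y + h) - u y - Q *v h - (1/2) *\<^sub>R contr Z h)) ((norm h)\<^sup>2 *\<^sub>R T h)"
      using jet[of "y + h"] by (simp add: dist_norm)
    from inner_mult_diff_le_of_mat_le_vee[OF this _ taylor assms(5)] elim
    have "(\<zeta> \<bullet> v) * (((P0 - Q) *v h + (1/2) *\<^sub>R contr (Y - Z) h) \<bullet> v) \<le> C * e * (norm h)\<^sup>2 * (norm v)\<^sup>2"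
      by (simp add: C_def contr_diff algebra_simps)
    also have "\<dots> = (C * e * (norm v)\<^sup>2) * (norm h)\<^sup>2"
      by (simp add: mult_ac)
    also have "\<dots> \<le> \<epsilon> * (norm h)\<^sup>2"
      using e_small by (rule mult_right_mono) simp
    finally show ?case .
  qed
qed

lemma eventually_at_0_along_ray:
  fixes h :: "'a::real_normed_vector"
  assumes "eventually P (at 0)" and "h \<noteq> 0"
  shows "eventually (\<lambda>t. P (t *\<^sub>R h)) (at (0::real))"
proof -
  have "filterlim (\<lambda>t. t *\<^sub>R h) (at 0) (at (0::real))"
    unfolding filterlim_at using assms(2) by (auto intro!: tendsto_eq_intros simp: eventually_at_filter)
  from eventually_compose_filterlim[OF assms(1) this] show ?thesis .
qed

text \<open>Restricting the estimate of \<open>jet2_minus_taylor_le\<close> to rays \<open>h = t h\<^sub>0\<close> separates the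
  first-order term (order \<open>t\<close>) from the second-order one (order \<open>t\<^sup>2\<close>).\<close>
lemma jet2_at_twice_diff_at:
  fixes u :: "real^'n \<Rightarrow> real^'N"
  assumes "open \<Omega>" and "y \<in> \<Omega>" and "twice_diff_at u y P0 Y" and "jet2 u \<Omega> \<zeta> y Q Z"
    and "norm \<zeta> = 1"
  shows "Q = P0" and "0 \<le> (\<zeta> \<bullet> v) * (contr (Z - Y) h \<bullet> v)"
proof -
  have ray: "eventually (\<lambda>t. t * ((\<zeta> \<bullet> v) * (((P0 - Q) *v h) \<bullet> v))
      + t\<^sup>2 * ((\<zeta> \<bullet> v) * ((1/2) *\<^sub>R contr (Y - Z) h \<bullet> v)) \<le> \<epsilon> * t\<^sup>2) (at 0)"
    if "\<epsilon> > 0" for \<epsilon> v h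
  proof (cases "h = 0")
    case True
    with \<open>\<epsilon> > 0\<close> show ?thesis
      by (simp add: contr_def zero_vec_def[symmetric])
  next
    case False
    have "norm \<zeta> \<le> 1" and "\<epsilon> / (norm h)\<^sup>2 > 0"
      using assms(5) \<open>\<epsilon> > 0\<close> False by simp_all
    from eventually_at_0_along_ray[OF jet2_minus_taylor_le[OF assms(1-4) this] False]
    have "eventually (\<lambda>t. (\<zeta> \<bullet> v) * (((P0 - Q) *v (t *\<^sub>R h)
        + (1/2) *\<^sub>R contr (Y - Z) (t *\<^sub>R h)) \<bullet> v) \<le> \<epsilon> / (norm h)\<^sup>2 * (norm (t *\<^sub>R h))\<^sup>2) (at 0)"
      .
    moreover have "\<epsilon> / (norm h)\<^sup>2 * (norm (t *\<^sub>R h))\<^sup>2 = \<epsilon> * t\<^sup>2" for t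
      using False by (simp add: power_mult_distrib)
    moreover have "(\<zeta> \<bullet> v) * (((P0 - Q) *v (t *\<^sub>R h) + (1/2) *\<^sub>R contr (Y - Z) (t *\<^sub>R h)) \<bullet> v)
        = t * ((\<zeta> \<bullet> v) * (((P0 - Q) *v h) \<bullet> v))
          + t\<^sup>2 * ((\<zeta> \<bullet> v) * ((1/2) *\<^sub>R contr (Y - Z) h \<bullet> v))" for t
      by (simp add: contr_scaleR algebra_simps)
    ultimately show ?thesis
      by (simp only:)
  qed
  have lin: "(\<zeta> \<bullet> v) * (((P0 - Q) *v h) \<bullet> v) = 0"
    and quad: "(\<zeta> \<bullet> v) * ((1/2) *\<^sub>R contr (Y - Z) h \<bullet> v) \<le> 0" for v h
    using linear_quadratic_le_little_o[OF ray] by blast+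
  have "\<zeta> \<noteq> 0"
    using assms(5) by auto
  with lin have "(P0 - Q) *v h = 0" for h
    by (rule eq_0_if_inner_mult_eq_0)
  then show "Q = P0"
    by (metis eq_iff_diff_eq_0 matrix_eq matrix_vector_mult_0)
  show "0 \<le> (\<zeta> \<bullet> v) * (contr (Z - Y) h \<bullet> v)"
    using quad[of v h] by (simp add: contr_diff algebra_simps)
qed

lemma jet2_inner_nonneg:
  fixes u :: "real^'n \<Rightarrow> real^'N"
  assumes "open \<Omega>" and "degenerate_elliptic F \<Omega>" and "y \<in> \<Omega>"
    and "twice_diff_at u y P0 Y" and "F y (u y) P0 Y = 0"
    and "jet2 u \<Omega> \<zeta> y Q Z" and "norm \<zeta> = 1"
  shows "0 \<le> \<zeta> \<bullet> F y (u y) Q Z"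
proof -
  have "Q = P0" and "\<And>h v. 0 \<le> (\<zeta> \<bullet> v) * (contr (Z - Y) h \<bullet> v)"
    using jet2_at_twice_diff_at[OF assms(1,3,4,6,7)] by blast+
  moreover have "sym_arr Y" and "sym_arr Z"
    using twice_diff_at_sym_arr[OF assms(4)] assms(6) by (auto simp: jet2_def)
  ultimately show ?thesis
    using degenerate_elliptic_inner_nonneg[OF assms(2,3)] assms(5) by blast
qed

lemma contact_solution_if_classical:
  fixes u :: "real^'n \<Rightarrow> real^'N"
  assumes "open \<Omega>" and "locally_bounded F \<Omega>" and "continuous_on \<Omega> u"
    and classical: "\<forall>x\<in>\<Omega>. \<exists>P X. twice_diff_at u x P X \<and> F x (u x) P X = 0"
    and "degenerate_elliptic F \<Omega>"
  shows "contact_solution F \<Omega> u"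
  unfolding contact_solution_def
proof (intro conjI ballI allI impI)
  fix x \<xi> P X
  assume "x \<in> \<Omega>" and "cjet2 u \<Omega> \<xi> x P X"
  then obtain \<xi>s xs Ps Xs where seq: "\<And>m. norm (\<xi>s m) = 1 \<and> xs m \<in> \<Omega> \<and> jet2 u \<Omega> (\<xi>s m) (xs m) (Ps m) (Xs m)"
    and "\<xi>s \<longlonglongrightarrow> \<xi>" and "xs \<longlonglongrightarrow> x" and "Ps \<longlonglongrightarrow> P" and "Xs \<longlonglongrightarrow> X"
    unfolding cjet2_def by blast
  have "0 \<le> \<xi>s m \<bullet> F (xs m) (u (xs m)) (Ps m) (Xs m)" for m
    using classical seq[of m] jet2_inner_nonneg[OF assms(1,5)] by blast
  moreover have "sym_arr (Xs m)" for m
    using seq[of m] by (simp add: jet2_def)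
  moreover have "(\<lambda>m. u (xs m)) \<longlonglongrightarrow> u x"
    using assms(1,3) \<open>x \<in> \<Omega>\<close> \<open>xs \<longlonglongrightarrow> x\<close> continuous_on_eq_continuous_at isCont_tendsto_compose
    by blast
  ultimately show "0 \<le> xi_env F \<Omega> \<xi> x (u x) P X"
    using xi_env_nonneg_of_limit[OF assms(2) \<open>x \<in> \<Omega>\<close> sym_arr_limit] seq
      \<open>\<xi>s \<longlonglongrightarrow> \<xi>\<close> \<open>xs \<longlonglongrightarrow> x\<close> \<open>Ps \<longlonglongrightarrow> P\<close> \<open>Xs \<longlonglongrightarrow> X\<close> by blast
qed (rule assms(3))

lemma contact_solution_F_eq_0:
  fixes u :: "real^'n \<Rightarrow> real^'N"
  assumes "open \<Omega>" and "contact_solution F \<Omega> u" and "F_continuous F \<Omega>"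
    and "x \<in> \<Omega>" and "twice_diff_at u x P X"
  shows "F x (u x) P X = 0"
proof (rule ccontr)
  assume "F x (u x) P X \<noteq> 0"
  define \<xi> where "\<xi> = - (1 / norm (F x (u x) P X)) *\<^sub>R F x (u x) P X"
  have "norm \<xi> = 1"
    using \<open>F x (u x) P X \<noteq> 0\<close> by (simp add: \<xi>_def)
  moreover have "continuous_on \<Omega> u"
    using assms(2) by (simp add: contact_solution_def)
  ultimately have "cjet2 u \<Omega> \<xi> x P X"
    using assms(1,4,5) by (intro jet2_imp_cjet2 twice_diff_at_jet2) auto
  with assms(2,4) \<open>norm \<xi> = 1\<close> have "0 \<le> xi_env F \<Omega> \<xi> x (u x) P X"
    by (simp add: contact_solution_def)
  also have "\<dots> \<le> ereal (\<xi> \<bullet> F x (u x) P X)"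
    by (rule xi_env_le_of_continuous[OF assms(3,4) twice_diff_at_sym_arr[OF assms(5)]])
  also have "\<xi> \<bullet> F x (u x) P X = - norm (F x (u x) P X)"
    using \<open>F x (u x) P X \<noteq> 0\<close> by (simp add: \<xi>_def power2_norm_eq_inner[symmetric] power2_eq_square)
  finally show False
    using \<open>F x (u x) P X \<noteq> 0\<close> by simp
qed

theorem theorem22:
  fixes \<Omega> :: "(real^'n) set"
    and F :: "real^'n \<Rightarrow> real^'N \<Rightarrow> real^'n^'N \<Rightarrow> real^'n^'n^'N \<Rightarrow> real^'N"
    and u :: "real^'n \<Rightarrow> real^'N"
  assumes "open \<Omega>"
    and "locally_bounded F \<Omega>"
    and "continuous_on \<Omega> u"
  shows "(contact_solution F \<Omega> u \<and> F_continuous F \<Omega> \<longrightarrow>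
            (\<forall>x\<in>\<Omega>. \<forall>P X. twice_diff_at u x P X \<longrightarrow> F x (u x) P X = 0))
       \<and> ((\<forall>x\<in>\<Omega>. \<exists>P X. twice_diff_at u x P X \<and> F x (u x) P X = 0) \<and>
            degenerate_elliptic F \<Omega> \<longrightarrow> contact_solution F \<Omega> u)"
  using contact_solution_F_eq_0[OF assms(1)] contact_solution_if_classical[OF assms] by blast

end
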